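(* (1) $S^{N-1}_{\mathbb C,\times}$ is left and right half-classical, and it is maximal with this property: every closed subspace $X\subset S^{N-1}_{\mathbb C,+}$ which is both left and right half-classical satisfies $X\subset S^{N-1}_{\mathbb C,\times}$. (2) $S^{N-1}_{\mathbb C,**}$ is fully half-classical. (3) $S^{N-1}_{\mathbb R,*}$ is fully half-classical, and every closed subspace $X\subset S^{N-1}_{\mathbb R,+}$ which is fully half-classical satisfies $X\subset S^{N-1}_{\mathbb R,*}$.
   Context: $C(S^{N-1}_{\mathbb C,+})$ is the universal unital C*-algebra generated by $x_1,\dots,x_N$ with $\sum_ix_ix_i^*=\sum_ix_i^*x_i=1$; $S^{N-1}_{\mathbb R,+}$ adds $x_i=x_i^*$. $S^{N-1}_{\mathbb C,\times}$: impose $ab^*c=cb^*a$ for all $a,b,c\in\{x_i\}$; $S^{N-1}_{\mathbb C,**}$: impose $abc=cba$ for all $a,b,c\in\{x_i,x_i^*\}$; $S^{N-1}_{\mathbb R,*}$: impose on $S^{N-1}_{\mathbb R,+}$ the relations $abc=cba$ for $a,b,c\in\{x_i\}$. Closed subspaces $X\subset S^{N-1}_{\mathbb C,+}$ are quotients $C(X)$ of $C(S^{N-1}_{\mathbb C,+})$. For such $X$: the left projective version $PX$ has $C(PX)$ = C*-subalgebra of $C(X)$ generated by $p_{ij}=x_ix_j^*$; the right projective version $P'X$ is generated by $q_{ij}=x_j^*x_i$; the full projective version $\mathcal PX$ is generated by all $p_{ij},q_{ij}$. $X$ is left/right/fully half-classical when $C(PX)$, $C(P'X)$, $C(\mathcal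 PX)$ respectively is commutative. *)

theory Defs
  imports "HOL-Analysis.Analysis"
begin

text \<open>The carrier is a type of class
  real_normed_algebra_1 and banach (unital real Banach algebra with norm 1 = 1);
  we add a complex scalar multiplication extending the real one and an
  involution satisfying the C*-identity.\<close>

locale cstar_algebra =
  fixes cscale :: "complex \<Rightarrow> 'a::{real_normed_algebra_1,banach} \<Rightarrow> 'a"
    and star :: "'a \<Rightarrow> 'a"
  assumes cscale_of_real: "\<And>r a. cscale (complex_of_real r) a = r *\<^sub>R a"
    and cscale_add_left: "\<And>c d a. cscale (c + d) a = cscale c a + cscale d a"
    and cscale_add_right: "\<And>c a b. cscale c (a + b) = cscale c a + cscale c b"
    and cscale_mult: "\<And>c d a. cscale (c * d) a = cscale c (cscale d a)"
    and cscale_one: "\<And>a. cscale 1 a = a"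
    and cscale_left: "\<And>c a b. cscale c (a * b) = cscale c a * b"
    and cscale_right: "\<And>c a b. cscale c (a * b) = a * cscale c b"
    and norm_cscale: "\<And>c a. norm (cscale c a) = cmod c * norm a"
    and star_star: "\<And>a. star (star a) = a"
    and star_add: "\<And>a b. star (a + b) = star a + star b"
    and star_cscale: "\<And>c a. star (cscale c a) = cscale (cnj c) (star a)"
    and star_mult: "\<And>a b. star (a * b) = star b * star a"
    and cstar_identity: "\<And>a. norm (star a * a) = (norm a)\<^sup>2"

definition cstar_subalg :: "(complex \<Rightarrow> 'a \<Rightarrow> 'a) \<Rightarrow> ('a \<Rightarrow> 'a) \<Rightarrow> 'a::{real_normed_algebra_1,banach} set \<Rightarrow> 'a set" where
  "cstar_subalg cscale star S =
     \<Inter>{B. S \<subseteq> B \<and> closed B \<and>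
            (\<forall>a\<in>B. \<forall>b\<in>B. a + b \<in> B \<and> a * b \<in> B) \<and>
            (\<forall>c. \<forall>a\<in>B. cscale c a \<in> B) \<and>
            (\<forall>a\<in>B. star a \<in> B)}"

definition commutative_set :: "'a::times set \<Rightarrow> bool" where
  "commutative_set B \<longleftrightarrow> (\<forall>a\<in>B. \<forall>b\<in>B. a * b = b * a)"

text \<open>Generators x_1,...,x_N (indices {1..N}) of C(X) for a closed subspace
  X of the free complex sphere: the algebra is generated by the x_i, and
  sum x_i x_i^* = sum x_i^* x_i = 1.\<close>

definition free_sphere_gens ::
  "(complex \<Rightarrow> 'a \<Rightarrow> 'a) \<Rightarrow> ('a \<Rightarrow> 'a) \<Rightarrow> nat \<Rightarrow> (nat \<Rightarrow> 'a::{real_normed_algebra_1,banach}) \<Rightarrow> bool" where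
  "free_sphere_gens cscale star N x \<longleftrightarrow>
     cstar_subalg cscale star (insert 1 (x ` {1..N})) = UNIV \<and>
     (\<Sum>i\<in>{1..N}. x i * star (x i)) = 1 \<and>
     (\<Sum>i\<in>{1..N}. star (x i) * x i) = 1"

text \<open>Real case: additionally x_i = x_i^*.\<close>
definition self_adjoint_gens :: "('a \<Rightarrow> 'a) \<Rightarrow> nat \<Rightarrow> (nat \<Rightarrow> 'a) \<Rightarrow> bool" where
  "self_adjoint_gens star N x \<longleftrightarrow> (\<forall>i\<in>{1..N}. star (x i) = x i)"

text \<open>Relations defining the subspaces S_{C,x}, S_{C,**}, S_{R,*}.\<close>
definition rel_times :: "('a \<Rightarrow> 'a) \<Rightarrow> nat \<Rightarrow> (nat \<Rightarrow> 'a::times) \<Rightarrow> bool" where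
  "rel_times star N x \<longleftrightarrow>
     (\<forall>a\<in>x ` {1..N}. \<forall>b\<in>x ` {1..N}. \<forall>c\<in>x ` {1..N}. a * star b * c = c * star b * a)"

definition rel_starstar :: "('a \<Rightarrow> 'a) \<Rightarrow> nat \<Rightarrow> (nat \<Rightarrow> 'a::times) \<Rightarrow> bool" where
  "rel_starstar star N x \<longleftrightarrow>
     (let G = x ` {1..N} \<union> star ` x ` {1..N} in
      \<forall>a\<in>G. \<forall>b\<in>G. \<forall>c\<in>G. a * b * c = c * b * a)"

definition rel_realstar :: "nat \<Rightarrow> (nat \<Rightarrow> 'a::times) \<Rightarrow> bool" where
  "rel_realstar N x \<longleftrightarrow>
     (\<forall>a\<in>x ` {1..N}. \<forall>b\<in>x ` {1..N}. \<forall>c\<in>x ` {1..N}. a * b * c = c * b * a)"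

definition left_proj :: "(complex \<Rightarrow> 'a \<Rightarrow> 'a) \<Rightarrow> ('a \<Rightarrow> 'a) \<Rightarrow> nat \<Rightarrow> (nat \<Rightarrow> 'a::{real_normed_algebra_1,banach}) \<Rightarrow> 'a set" where
  "left_proj cscale star N x = cstar_subalg cscale star {x i * star (x j) | i j. i \<in> {1..N} \<and> j \<in> {1..N}}"

definition right_proj :: "(complex \<Rightarrow> 'a \<Rightarrow> 'a) \<Rightarrow> ('a \<Rightarrow> 'a) \<Rightarrow> nat \<Rightarrow> (nat \<Rightarrow> 'a::{real_normed_algebra_1,banach}) \<Rightarrow> 'a set" where
  "right_proj cscale star N x = cstar_subalg cscale star {star (x j) * x i | i j. i \<in> {1..N} \<and> j \<in> {1..N}}"

definition full_proj :: "(complex \<Rightarrow> 'a \<Rightarrow> 'a) \<Rightarrow> ('a \<Rightarrow> 'a) \<Rightarrow> nat \<Rightarrow> (nat \<Rightarrow> 'a::{real_normed_algebra_1,banach}) \<Rightarrow> 'a set" where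
  "full_proj cscale star N x = cstar_subalg cscale star
     ({x i * star (x j) | i j. i \<in> {1..N} \<and> j \<in> {1..N}} \<union>
      {star (x j) * x i | i j. i \<in> {1..N} \<and> j \<in> {1..N}})"

definition left_half_classical where
  "left_half_classical cscale star N x \<longleftrightarrow> commutative_set (left_proj cscale star N x)"
definition right_half_classical where
  "right_half_classical cscale star N x \<longleftrightarrow> commutative_set (right_proj cscale star N x)"
definition fully_half_classical where
  "fully_half_classical cscale star N x \<longleftrightarrow> commutative_set (full_proj cscale star N x)"

end

theory Submission
  imports Defs
begin

text \<open>A star-closed set of generators is commutative iff the C*-algebra it generates is,
  because the commutant of a star-closed set is itself a C*-subalgebra. Hence each
  half-classicality condition only concerns the products \<open>p\<^sub>i\<^sub>j = x\<^sub>i x\<^sub>j\<^sup>*\<close>, \<open>q\<^sub>i\<^sub>j = x\<^sub>j\<^sup>* x\<^sub>i\<close>.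
  Commutation of these products follows from relations of the form \<open>abc = cba\<close> by
  regrouping; conversely, inserting \<open>\<Sum>\<^sub>m x\<^sub>m\<^sup>* x\<^sub>m = 1\<close> and \<open>\<Sum>\<^sub>m x\<^sub>m x\<^sub>m\<^sup>* = 1\<close> turns commutation
  of the \<open>p\<close>'s and of the \<open>q\<close>'s back into \<open>x\<^sub>i x\<^sub>j\<^sup>* x\<^sub>k = x\<^sub>k x\<^sub>j\<^sup>* x\<^sub>i\<close>.\<close>

lemma cstar_subalg_generators: "S \<subseteq> cstar_subalg cs st S"
  unfolding cstar_subalg_def by blast

lemma cstar_subalg_least:
  assumes "S \<subseteq> B" "closed B" "\<forall>a\<in>B. \<forall>b\<in>B. a + b \<in> B \<and> a * b \<in> B"
    "\<forall>c. \<forall>a\<in>B. cs c a \<in> B" "\<forall>a\<in>B. st a \<in> B"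
  shows "cstar_subalg cs st S \<subseteq> B"
  unfolding cstar_subalg_def using assms by (intro Inter_lower) blast

lemma cstar_subalg_star: "a \<in> cstar_subalg cs st S \<Longrightarrow> st a \<in> cstar_subalg cs st S"
  unfolding cstar_subalg_def by blast

lemma commutative_set_subset: "commutative_set B \<Longrightarrow> A \<subseteq> B \<Longrightarrow> commutative_set A"
  unfolding commutative_set_def by blast

lemma closed_commutant:
  fixes T :: "'a::real_normed_algebra set"
  shows "closed {a. \<forall>t\<in>T. a * t = t * a}"
proof -
  have "{a. \<forall>t\<in>T. a * t = t * a} = (\<Inter>t\<in>T. {a. a * t = t * a})" by blast
  moreover have "closed {a::'a. a * t = t * a}" for t
    by (intro closed_Collect_eq continuous_intros)
  ultimately show ?thesis by auto
qed

context cstar_algebra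
begin

lemma cstar_subalg_commutant:
  assumes "\<forall>t\<in>T. star t \<in> T" and "S \<subseteq> {a. \<forall>t\<in>T. a * t = t * a}"
  shows "cstar_subalg cscale star S \<subseteq> {a. \<forall>t\<in>T. a * t = t * a}"
proof (rule cstar_subalg_least[OF assms(2) closed_commutant], safe)
  fix a t assume a: "\<forall>t\<in>T. a * t = t * a" and t: "t \<in> T"
  then have "a * star t = star t * a" using assms(1) by blast
  then have "star (a * star t) = star (star t * a)" by simp
  then show "star a * t = t * star a" by (simp add: star_mult star_star)
qed (auto simp: distrib_left distrib_right cscale_left[symmetric] cscale_right[symmetric]
  mult.assoc[symmetric], metis mult.assoc)

lemma commutative_cstar_subalg_iff:
  assumes "\<forall>a\<in>S. star a \<in> S"
  shows "commutative_set (cstar_subalg cscale star S) \<longleftrightarrow> commutative_set S"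
proof
  assume "commutative_set S"
  then have "cstar_subalg cscale star S \<subseteq> {a. \<forall>t\<in>S. a * t = t * a}"
    using assms unfolding commutative_set_def by (intro cstar_subalg_commutant) auto
  then have "S \<subseteq> {a. \<forall>t\<in>cstar_subalg cscale star S. a * t = t * a}" by auto
  then have "cstar_subalg cscale star S
      \<subseteq> {a. \<forall>t\<in>cstar_subalg cscale star S. a * t = t * a}"
    using cstar_subalg_star by (intro cstar_subalg_commutant) blast+
  then show "commutative_set (cstar_subalg cscale star S)"
    unfolding commutative_set_def by blast
qed (rule commutative_set_subset[OF _ cstar_subalg_generators])

lemma star_closed_left_gens:
  "\<forall>a\<in>{x i * star (x j) | i j. i \<in> I \<and> j \<in> I}. star a \<in> {x i * star (x j) | i j. i \<in> I \<and> j \<in> I}"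
  by (auto simp: star_mult star_star) blast

lemma star_closed_right_gens:
  "\<forall>a\<in>{star (x j) * x i | i j. i \<in> I \<and> j \<in> I}. star a \<in> {star (x j) * x i | i j. i \<in> I \<and> j \<in> I}"
  by (auto simp: star_mult star_star) blast

lemma left_half_classical_iff:
  "left_half_classical cscale star N x \<longleftrightarrow>
     commutative_set {x i * star (x j) | i j. i \<in> {1..N} \<and> j \<in> {1..N}}"
  unfolding left_half_classical_def left_proj_def
  by (rule commutative_cstar_subalg_iff[OF star_closed_left_gens])

lemma right_half_classical_iff:
  "right_half_classical cscale star N x \<longleftrightarrow>
     commutative_set {star (x j) * x i | i j. i \<in> {1..N} \<and> j \<in> {1..N}}"
  unfolding right_half_classical_def right_proj_def
  by (rule commutative_cstar_subalg_iff[OF star_closed_right_gens])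

lemma fully_half_classical_iff:
  "fully_half_classical cscale star N x \<longleftrightarrow>
     commutative_set ({x i * star (x j) | i j. i \<in> {1..N} \<and> j \<in> {1..N}} \<union>
                      {star (x j) * x i | i j. i \<in> {1..N} \<and> j \<in> {1..N}})"
  unfolding fully_half_classical_def full_proj_def
  using star_closed_left_gens star_closed_right_gens
  by (intro commutative_cstar_subalg_iff) blast

end

lemma pair_products_commute:
  fixes G :: "'a::semigroup_mult set"
  assumes "\<forall>a\<in>G. \<forall>b\<in>G. \<forall>c\<in>G. a * b * c = c * b * a"
    and "a \<in> G" "b \<in> G" "c \<in> G" "d \<in> G"
  shows "a * b * (c * d) = c * d * (a * b)"
proof -
  have "a * b * c = c * b * a" "b * a * d = d * a * b" using assms by blast+
  then have "a * b * (c * d) = c * (b * a * d)" by (metis mult.assoc)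
  also have "\<dots> = c * (d * a * b)" using \<open>b * a * d = d * a * b\<close> by simp
  finally show ?thesis by (simp add: mult.assoc)
qed

lemma alternating_products_commute:
  fixes x y :: "'b \<Rightarrow> 'a::semigroup_mult"
  assumes xyx: "\<And>i j k. i \<in> I \<Longrightarrow> j \<in> I \<Longrightarrow> k \<in> I \<Longrightarrow> x i * y j * x k = x k * y j * x i"
    and yxy: "\<And>i j k. i \<in> I \<Longrightarrow> j \<in> I \<Longrightarrow> k \<in> I \<Longrightarrow> y i * x j * y k = y k * x j * y i"
    and "i \<in> I" "j \<in> I" "k \<in> I" "l \<in> I"
  shows "x i * y j * (x k * y l) = x k * y l * (x i * y j)"
proof -
  have "x i * y j * (x k * y l) = (x i * y j * x k) * y l" by (simp add: mult.assoc)
  also have "\<dots> = x k * (y j * x i * y l)" using xyx[of i j k] assms by (metis mult.assoc)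
  also have "\<dots> = x k * (y l * x i * y j)" using yxy[of j i l] assms by simp
  finally show ?thesis by (simp add: mult.assoc)
qed

text \<open>The converse: multiply by \<open>1 = \<Sum>\<^sub>m y\<^sub>m x\<^sub>m\<close> on the right, commute \<open>x\<^sub>i y\<^sub>j\<close> past \<open>x\<^sub>k y\<^sub>m\<close>
  and \<open>y\<^sub>m x\<^sub>i\<close> past \<open>y\<^sub>j x\<^sub>m\<close>, and collapse \<open>\<Sum>\<^sub>m x\<^sub>m y\<^sub>m = 1\<close>.\<close>

lemma reversal_of_commuting_products:
  fixes x y :: "'b \<Rightarrow> 'a::semiring_1"
  assumes xy_one: "(\<Sum>m\<in>I. x m * y m) = 1" and yx_one: "(\<Sum>m\<in>I. y m * x m) = 1"
    and P: "\<And>i j k l. i \<in> I \<Longrightarrow> j \<in> I \<Longrightarrow> k \<in> I \<Longrightarrow> l \<in> I \<Longrightarrow>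
             x i * y j * (x k * y l) = x k * y l * (x i * y j)"
    and Q: "\<And>i j k l. i \<in> I \<Longrightarrow> j \<in> I \<Longrightarrow> k \<in> I \<Longrightarrow> l \<in> I \<Longrightarrow>
             y j * x i * (y l * x k) = y l * x k * (y j * x i)"
    and ijk: "i \<in> I" "j \<in> I" "k \<in> I"
  shows "x i * y j * x k = x k * y j * x i"
proof -
  have "x i * y j * x k = x i * y j * x k * (\<Sum>m\<in>I. y m * x m)"
    using yx_one by simp
  also have "\<dots> = (\<Sum>m\<in>I. x i * y j * (x k * y m) * x m)"
    by (simp add: sum_distrib_left mult.assoc)
  also have "\<dots> = (\<Sum>m\<in>I. x k * (y j * x m) * (y m * x i))"
  proof (rule sum.cong[OF refl])
    fix m assume m: "m \<in> I"
    have "x i * y j * (x k * y m) * x m = x k * (y m * x i) * (y j * x m)"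
      using P[OF ijk m] by (simp add: mult.assoc)
    also have "\<dots> = x k * (y j * x m) * (y m * x i)"
      using Q[OF ijk(1) m m ijk(2)] by (simp add: mult.assoc)
    finally show "x i * y j * (x k * y m) * x m = x k * (y j * x m) * (y m * x i)" .
  qed
  also have "\<dots> = x k * y j * (\<Sum>m\<in>I. x m * y m) * x i"
    by (simp add: sum_distrib_left sum_distrib_right mult.assoc)
  finally show ?thesis using xy_one by simp
qed

context cstar_algebra
begin

lemma half_classical_of_rel_times:
  assumes "rel_times star N x"
  shows "left_half_classical cscale star N x \<and> right_half_classical cscale star N x"
proof -
  have xyx: "x i * star (x j) * x k = x k * star (x j) * x i"
    if "i \<in> {1..N}" "j \<in> {1..N}" "k \<in> {1..N}" for i j k
    using assms that unfolding rel_times_def by blast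
  have yxy: "star (x i) * x j * star (x k) = star (x k) * x j * star (x i)"
    if "i \<in> {1..N}" "j \<in> {1..N}" "k \<in> {1..N}" for i j k
    using arg_cong[OF xyx[OF that(3,2,1)], of star] by (simp add: star_mult star_star mult.assoc)
  show ?thesis
    unfolding left_half_classical_iff right_half_classical_iff commutative_set_def
    using alternating_products_commute[where I="{1..N}" and x=x and y="\<lambda>i. star (x i)", OF xyx yxy]
      alternating_products_commute[where I="{1..N}" and x="\<lambda>i. star (x i)" and y=x, OF yxy xyx]
    by blast
qed

lemma rel_times_of_half_classical:
  assumes "free_sphere_gens cscale star N x"
    and "left_half_classical cscale star N x" "right_half_classical cscale star N x"
  shows "rel_times star N x"
  unfolding rel_times_def
proof safe
  fix i j k assume "i \<in> {1..N}" "j \<in> {1..N}" "k \<in> {1..N}"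
  with assms show "x i * star (x j) * x k = x k * star (x j) * x i"
    unfolding free_sphere_gens_def left_half_classical_iff right_half_classical_iff
      commutative_set_def
    by (intro reversal_of_commuting_products[where I="{1..N}" and x=x and y="\<lambda>i. star (x i)"]) blast+
qed

lemma fully_half_classical_of_rel_starstar:
  assumes "rel_starstar star N x"
  shows "fully_half_classical cscale star N x"
proof -
  define G where "G = x ` {1..N} \<union> star ` x ` {1..N}"
  have "\<forall>a\<in>G. \<forall>b\<in>G. \<forall>c\<in>G. a * b * c = c * b * a"
    using assms unfolding rel_starstar_def G_def Let_def by blast
  then have "commutative_set {a * b | a b. a \<in> G \<and> b \<in> G}"
    unfolding commutative_set_def using pair_products_commute by blast
  then show ?thesis
    unfolding fully_half_classical_iff
    by (rule commutative_set_subset) (unfold G_def, blast)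
qed

lemma rel_starstar_of_rel_realstar:
  assumes "self_adjoint_gens star N x" "rel_realstar N x"
  shows "rel_starstar star N x"
proof -
  have "star ` x ` {1..N} = x ` {1..N}"
    using assms(1) unfolding self_adjoint_gens_def image_image by (intro image_cong) auto
  then show ?thesis
    using assms(2) unfolding rel_starstar_def rel_realstar_def Let_def by simp
qed

lemma rel_realstar_of_fully_half_classical:
  assumes "free_sphere_gens cscale star N x" "self_adjoint_gens star N x"
    and "fully_half_classical cscale star N x"
  shows "rel_realstar N x"
proof -
  have "left_half_classical cscale star N x" "right_half_classical cscale star N x"
    using assms(3) commutative_set_subset
    unfolding fully_half_classical_iff left_half_classical_iff right_half_classical_iff
    by blast+
  with assms(1) have "rel_times star N x"
    by (rule rel_times_of_half_classical)
  then show ?thesis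
    using assms(2) unfolding rel_times_def rel_realstar_def self_adjoint_gens_def by auto
qed

end

theorem proposition3p5:
  fixes cscale :: "complex \<Rightarrow> 'a::{real_normed_algebra_1,banach} \<Rightarrow> 'a"
    and star :: "'a \<Rightarrow> 'a" and N :: nat
  assumes "cstar_algebra cscale star"
  shows
    "(\<forall>x. free_sphere_gens cscale star N x \<and> rel_times star N x \<longrightarrow>
          left_half_classical cscale star N x \<and> right_half_classical cscale star N x) \<and>
     (\<forall>x. free_sphere_gens cscale star N x \<and>
          left_half_classical cscale star N x \<and> right_half_classical cscale star N x \<longrightarrow>
          rel_times star N x) \<and>
     (\<forall>x. free_sphere_gens cscale star N x \<and> rel_starstar star N x \<longrightarrow>
          fully_half_classical cscale star N x) \<and>
     (\<forall>x. free_sphere_gens cscale star N x \<and> self_adjoint_gens star N x \<and> rel_realstar N x \<longrightarrow>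
          fully_half_classical cscale star N x) \<and>
     (\<forall>x. free_sphere_gens cscale star N x \<and> self_adjoint_gens star N x \<and>
          fully_half_classical cscale star N x \<longrightarrow> rel_realstar N x)"
proof -
  interpret cstar_algebra cscale star by (rule assms)
  show ?thesis
    using half_classical_of_rel_times rel_times_of_half_classical
      fully_half_classical_of_rel_starstar rel_starstar_of_rel_realstar
      rel_realstar_of_fully_half_classical
    by blast
qed

end
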